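(* Let $d\ge1$ and $q\in\{2,4\}$, and let $G$ be a function on $[0,\infty)$ with $G\in\mathcal M_{d,0,q}\cap\mathcal N_{\frac q2-1}$. Let $S_1,\ldots,S_{q/2}$ be the subintervals of $[0,\infty)$ from the definition of sign changes for $G$. Then $G(x)\ge0$ for $x\in S_1\cup S_3\cup\cdots$ and $G(x)\le0$ for $x\in S_2\cup S_4\cup\cdots$. Moreover, $\mathrm{sign}(B_{d,q}(G))=(-1)^{q/2+1}$.
   Context: $B_{d,i}(g)=\int_0^\infty x^{d-1+i}g(x)dx$; $b_d=2\pi^{d/2}/\Gamma(d/2)$. $\mathcal M_{d,0,q}$ is the set of $g$ on $[0,\infty)$ with $B_{d,0}(g)=b_d^{-1}$, $B_{d,i}(g)=0$ for $i=2,4,\ldots,q-2$, and $B_{d,q}(g)\ne0$. $\mathcal N_j$ is the set of functions on $[0,\infty)$ that change their sign exactly $j$ times on $[0,\infty)$, where $g$ changes its sign $k$ times on $[a,b]$ if there are $a=x_0<\cdots<x_{k+1}=b$ such that, with $S_j=[x_{j-1},x_j]$, on each $S_j$ either $g\le0$ with $g<0$ somewhere or $g\ge0$ with $g>0$ somewhere, and (if $k\ge1$) $g(x)g(y)\le0$ for all $x\in S_j$, $y\in S_{j+1}$. *)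

theory Defs
  imports "HOL-Analysis.Analysis"
begin

definition Bmom :: "nat \<Rightarrow> nat \<Rightarrow> (real \<Rightarrow> real) \<Rightarrow> real" where
  "Bmom d i g = integral {0..} (\<lambda>x. x ^ (d - 1 + i) * g x)"

text \<open>b_d = 2 pi^(d/2) / Gamma(d/2), surface area of the unit sphere.\<close>
definition bconst :: "nat \<Rightarrow> real" where
  "bconst d = 2 * pi powr (real d / 2) / Gamma (real d / 2)"

definition Mclass :: "nat \<Rightarrow> nat \<Rightarrow> (real \<Rightarrow> real) set" where
  "Mclass d q = {g.
     (\<forall>i\<in>{0..q}. even i \<longrightarrow> (\<lambda>x. x ^ (d - 1 + i) * g x) absolutely_integrable_on {0..}) \<and>
     Bmom d 0 g = 1 / bconst d \<and>
     (\<forall>i. even i \<and> 2 \<le> i \<and> i \<le> q - 2 \<longrightarrow> Bmom d i g = 0) \<and>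
     Bmom d q g \<noteq> 0}"

text \<open>Subinterval S_j (j = 1..k+1) for partition points x 0 = 0 < x 1 < ... < x k,
  with x_(k+1) = infinity.\<close>
definition seg :: "(nat \<Rightarrow> real) \<Rightarrow> nat \<Rightarrow> nat \<Rightarrow> real set" where
  "seg x k j = (if j = Suc k then {x (j - 1)..} else {x (j - 1)..x j})"

definition sign_part :: "(real \<Rightarrow> real) \<Rightarrow> (nat \<Rightarrow> real) \<Rightarrow> nat \<Rightarrow> bool" where
  "sign_part g x k \<longleftrightarrow>
     x 0 = 0 \<and> (\<forall>i<k. x i < x (Suc i)) \<and>
     (\<forall>j\<in>{1..Suc k}.
        ((\<forall>t\<in>seg x k j. g t \<le> 0) \<and> (\<exists>t\<in>seg x k j. g t < 0)) \<or>
        ((\<forall>t\<in>seg x k j. g t \<ge> 0) \<and> (\<exists>t\<in>seg x k j. g t > 0))) \<and>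
     (k \<ge> 1 \<longrightarrow> (\<forall>j\<in>{1..k}. \<forall>s\<in>seg x k j. \<forall>t\<in>seg x k (Suc j). g s * g t \<le> 0))"

definition changes_sign :: "(real \<Rightarrow> real) \<Rightarrow> nat \<Rightarrow> bool" where
  "changes_sign g k \<longleftrightarrow> (\<exists>x. sign_part g x k)"

definition Nclass :: "nat \<Rightarrow> (real \<Rightarrow> real) set" where
  "Nclass j = {g. changes_sign g j \<and> (\<forall>k. changes_sign g k \<longrightarrow> k = j)}"

end

theory Submission
  imports Defs
begin

text \<open>Since b_d > 0, the zeroth moment B_{d,0}(G) is positive. For q = 2 this rules out
  G \<le> 0, so G \<ge> 0 and hence B_{d,2}(G) > 0. For q = 4 let a be the point where G changes
  sign and integrate G against the weight x^i (x^2 - a^2), which changes sign at a as well: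
  the integrand has constant sign, and the integral equals B_{d,i+2}(G) - a^2 B_{d,i}(G).
  For i = 0 this is -a^2 B_{d,0}(G) < 0, which forces G \<ge> 0 before a; for i = 2 it is
  B_{d,4}(G), which is therefore negative.\<close>

lemma bconst_pos: "d \<ge> 1 \<Longrightarrow> bconst d > 0"
  by (simp add: bconst_def Gamma_real_pos)

lemma seg_last: "seg x k (Suc k) = {x k..}"
  by (simp add: seg_def)

lemma seg_inner: "j \<le> k \<Longrightarrow> seg x k j = {x (j - 1)..x j}"
  by (simp add: seg_def)

lemma sign_part_segment:
  assumes "sign_part g x k" "1 \<le> j" "j \<le> Suc k"
  shows "((\<forall>t\<in>seg x k j. g t \<le> 0) \<and> (\<exists>t\<in>seg x k j. g t < 0)) \<or>
         ((\<forall>t\<in>seg x k j. g t \<ge> 0) \<and> (\<exists>t\<in>seg x k j. g t > 0))"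
  using assms by (simp add: sign_part_def)

lemma sign_part_start: "sign_part g x k \<Longrightarrow> x 0 = 0"
  by (simp add: sign_part_def)

lemma sign_part_less: "sign_part g x k \<Longrightarrow> i < k \<Longrightarrow> x i < x (Suc i)"
  by (simp add: sign_part_def)

lemma sign_part_next_nonpos:
  assumes "sign_part g x k" "1 \<le> j" "j \<le> k"
    and "s \<in> seg x k j" "g s > 0" "t \<in> seg x k (Suc j)"
  shows "g t \<le> 0"
proof -
  have "g s * g t \<le> 0"
    using assms unfolding sign_part_def by auto
  with \<open>g s > 0\<close> show ?thesis
    by (simp add: mult_le_0_iff)
qed

lemma sign_part_next_nonneg:
  assumes "sign_part g x k" "1 \<le> j" "j \<le> k"
    and "s \<in> seg x k j" "g s < 0" "t \<in> seg x k (Suc j)"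
  shows "g t \<ge> 0"
proof -
  have "g s * g t \<le> 0"
    using assms unfolding sign_part_def by auto
  with \<open>g s < 0\<close> show ?thesis
    by (simp add: mult_le_0_iff)
qed

lemma has_integral_sign_change_weight_nonneg:
  fixes g :: "real \<Rightarrow> real"
  assumes "((\<lambda>x. x ^ n * (x\<^sup>2 - a\<^sup>2) * g x) has_integral I) {0..}"
    and "a \<ge> 0" "\<forall>t\<in>{0..a}. g t \<le> 0" "\<forall>t\<in>{a..}. g t \<ge> 0"
  shows "I \<ge> 0"
proof (rule has_integral_nonneg[OF assms(1)])
  fix y :: real
  assume "y \<in> {0..}"
  then have "y \<ge> 0" by simp
  have "(y\<^sup>2 - a\<^sup>2) * g y \<ge> 0"
  proof (cases "y \<le> a")
    case True
    then have "y\<^sup>2 \<le> a\<^sup>2" using \<open>y \<ge> 0\<close> by (simp add: power_mono)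
    moreover have "g y \<le> 0" using assms(3) True \<open>y \<ge> 0\<close> by simp
    ultimately show ?thesis by (simp add: mult_nonpos_nonpos)
  next
    case False
    then have "a\<^sup>2 \<le> y\<^sup>2" using \<open>a \<ge> 0\<close> by (simp add: power_mono)
    moreover have "g y \<ge> 0" using assms(4) False by simp
    ultimately show ?thesis by simp
  qed
  then show "0 \<le> y ^ n * (y\<^sup>2 - a\<^sup>2) * g y"
    using \<open>y \<ge> 0\<close> by (simp add: mult.assoc)
qed

lemma Mclass_moment_integrable:
  assumes "G \<in> Mclass d q" "even i" "i \<le> q"
  shows "(\<lambda>x. x ^ (d - 1 + i) * G x) integrable_on {0..}"
  using assms unfolding Mclass_def absolutely_integrable_on_def by auto

lemma Mclass_Bmom0_pos: "d \<ge> 1 \<Longrightarrow> G \<in> Mclass d q \<Longrightarrow> Bmom d 0 G > 0"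
  using bconst_pos by (simp add: Mclass_def)

lemma Mclass_weighted_moment_has_integral:
  assumes "G \<in> Mclass d q" "even i" "i + 2 \<le> q"
  shows "((\<lambda>x. x ^ (d - 1 + i) * (x\<^sup>2 - c) * G x)
           has_integral (Bmom d (i + 2) G - c * Bmom d i G)) {0..}"
proof -
  have "((\<lambda>x. x ^ (d - 1 + (i + 2)) * G x) has_integral Bmom d (i + 2) G) {0..}"
    using Mclass_moment_integrable[OF assms(1), of "i + 2"] assms
    by (simp add: Bmom_def integrable_integral)
  moreover have "((\<lambda>x. c * (x ^ (d - 1 + i) * G x)) has_integral c * Bmom d i G) {0..}"
    using Mclass_moment_integrable[OF assms(1), of i] assms
    by (intro has_integral_mult_right) (simp add: Bmom_def integrable_integral)
  ultimately have "((\<lambda>x. x ^ (d - 1 + (i + 2)) * G x - c * (x ^ (d - 1 + i) * G x))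
                      has_integral (Bmom d (i + 2) G - c * Bmom d i G)) {0..}"
    by (rule has_integral_diff)
  moreover have "x ^ (d - 1 + (i + 2)) * G x - c * (x ^ (d - 1 + i) * G x)
                   = x ^ (d - 1 + i) * (x\<^sup>2 - c) * G x" for x :: real
    by (simp add: power_add power2_eq_square algebra_simps)
  ultimately show ?thesis by simp
qed

lemma Mclass2_nonneg:
  assumes "d \<ge> 1" "G \<in> Mclass d 2" "sign_part G x 0" "t \<ge> 0"
  shows "G t \<ge> 0"
proof -
  have "(\<forall>t\<in>seg x 0 1. G t \<le> 0) \<or> (\<forall>t\<in>seg x 0 1. G t \<ge> 0)"
    using sign_part_segment[OF assms(3), of 1] by auto
  moreover have "seg x 0 1 = {0..}"
    using sign_part_start[OF assms(3)] seg_last[of x 0] by simp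
  ultimately have signs: "(\<forall>t\<in>{0..}. G t \<le> 0) \<or> (\<forall>t\<in>{0..}. G t \<ge> 0)"
    by simp
  have "\<not> (\<forall>t\<in>{0..}. G t \<le> 0)"
  proof
    assume nonpos: "\<forall>t\<in>{0..}. G t \<le> 0"
    have "((\<lambda>x. x ^ (d - 1) * G x) has_integral Bmom d 0 G) {0..}"
      using Mclass_moment_integrable[OF assms(2), of 0] by (simp add: Bmom_def integrable_integral)
    then have "- Bmom d 0 G \<ge> 0"
      by (rule has_integral_nonneg[OF has_integral_neg]) (use nonpos in \<open>simp add: mult_nonneg_nonpos\<close>)
    with Mclass_Bmom0_pos[OF assms(1,2)] show False by simp
  qed
  with signs assms(4) show ?thesis by simp
qed

lemma Mclass2_Bmom2_pos:
  assumes "G \<in> Mclass d 2" "\<forall>t\<ge>0. G t \<ge> 0"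
  shows "Bmom d 2 G > 0"
proof -
  have "((\<lambda>x. x ^ (d - 1 + 2) * G x) has_integral Bmom d 2 G) {0..}"
    using Mclass_moment_integrable[OF assms(1), of 2] by (simp add: Bmom_def integrable_integral)
  then have "Bmom d 2 G \<ge> 0"
    by (rule has_integral_nonneg) (use assms(2) in simp)
  moreover have "Bmom d 2 G \<noteq> 0" using assms(1) by (simp add: Mclass_def)
  ultimately show ?thesis by simp
qed

lemma Mclass4_sign_pattern:
  assumes "d \<ge> 1" "G \<in> Mclass d 4" "sign_part G x 1"
  shows "(\<forall>t\<in>{0..x 1}. G t \<ge> 0) \<and> (\<forall>t\<in>{x 1..}. G t \<le> 0)"
proof -
  define a where "a = x 1"
  have "a > 0"
    using sign_part_less[OF assms(3), of 0] sign_part_start[OF assms(3)] by (simp add: a_def)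
  have S1: "seg x 1 1 = {0..a}"
    using seg_inner[of 1 1 x] sign_part_start[OF assms(3)] by (simp add: a_def)
  have S2: "seg x 1 2 = {a..}"
    using seg_last[of x 1] by (simp add: a_def numeral_2_eq_2)
  have first: "\<forall>t\<in>{0..a}. G t \<ge> 0"
  proof (rule ccontr)
    assume "\<not> (\<forall>t\<in>{0..a}. G t \<ge> 0)"
    then obtain s where "s \<in> {0..a}" "G s < 0" and nonpos: "\<forall>t\<in>{0..a}. G t \<le> 0"
      using sign_part_segment[OF assms(3), of 1] S1 by auto
    then have nonneg: "\<forall>t\<in>{a..}. G t \<ge> 0"
      using sign_part_next_nonneg[OF assms(3), of 1 s] S1 S2 by (auto simp: numeral_2_eq_2)
    have "((\<lambda>x. x ^ (d - 1 + 0) * (x\<^sup>2 - a\<^sup>2) * G x)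
            has_integral (Bmom d 2 G - a\<^sup>2 * Bmom d 0 G)) {0..}"
      using Mclass_weighted_moment_has_integral[OF assms(2), of 0 "a\<^sup>2"] by (simp add: numeral_2_eq_2)
    then have "Bmom d 2 G - a\<^sup>2 * Bmom d 0 G \<ge> 0"
      by (rule has_integral_sign_change_weight_nonneg) (use \<open>a > 0\<close> nonpos nonneg in auto)
    moreover have "Bmom d 2 G = 0" using assms(2) by (simp add: Mclass_def)
    moreover have "a\<^sup>2 * Bmom d 0 G > 0"
      using Mclass_Bmom0_pos[OF assms(1,2)] \<open>a > 0\<close> by simp
    ultimately show False by simp
  qed
  moreover have "(\<exists>t\<in>{0..a}. G t < 0) \<or> (\<exists>t\<in>{0..a}. G t > 0)"
    using sign_part_segment[OF assms(3), of 1] S1 by auto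
  ultimately obtain s where "s \<in> {0..a}" "G s > 0"
    by (meson not_less)
  then have "\<forall>t\<in>{a..}. G t \<le> 0"
    using sign_part_next_nonpos[OF assms(3), of 1 s] S1 S2 by (auto simp: numeral_2_eq_2)
  with first show ?thesis by (simp add: a_def)
qed

lemma Mclass4_Bmom4_neg:
  assumes "G \<in> Mclass d 4" "a \<ge> 0" "\<forall>t\<in>{0..a}. G t \<ge> 0" "\<forall>t\<in>{a..}. G t \<le> 0"
  shows "Bmom d 4 G < 0"
proof -
  have weighted: "((\<lambda>x. x ^ (d - 1 + 2) * (x\<^sup>2 - a\<^sup>2) * G x)
                    has_integral (Bmom d 4 G - a\<^sup>2 * Bmom d 2 G)) {0..}"
    using Mclass_weighted_moment_has_integral[OF assms(1), of 2 "a\<^sup>2"] by simp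
  have "((\<lambda>x. x ^ (d - 1 + 2) * (x\<^sup>2 - a\<^sup>2) * - G x)
          has_integral - (Bmom d 4 G - a\<^sup>2 * Bmom d 2 G)) {0..}"
    using has_integral_neg[OF weighted] by simp
  then have "- (Bmom d 4 G - a\<^sup>2 * Bmom d 2 G) \<ge> 0"
    by (rule has_integral_sign_change_weight_nonneg) (use assms(2-4) in auto)
  moreover have "Bmom d 2 G = 0" "Bmom d 4 G \<noteq> 0" using assms(1) by (simp_all add: Mclass_def)
  ultimately show ?thesis by simp
qed

theorem lemmaB3:
  fixes d q :: nat and G :: "real \<Rightarrow> real"
  assumes "d \<ge> 1" and "q \<in> {2, 4}"
    and "G \<in> Mclass d q" and "G \<in> Nclass (q div 2 - 1)"
  shows "(\<forall>x. sign_part G x (q div 2 - 1) \<longrightarrow>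
            (\<forall>j\<in>{1..q div 2}. odd j \<longrightarrow> (\<forall>t\<in>seg x (q div 2 - 1) j. G t \<ge> 0)) \<and>
            (\<forall>j\<in>{1..q div 2}. even j \<longrightarrow> (\<forall>t\<in>seg x (q div 2 - 1) j. G t \<le> 0)))
         \<and> sgn (Bmom d q G) = (-1) ^ (q div 2 + 1)"
proof -
  obtain x0 where x0: "sign_part G x0 (q div 2 - 1)"
    using assms(4) by (auto simp: Nclass_def changes_sign_def)
  consider "q = 2" | "q = 4" using assms(2) by auto
  then show ?thesis
  proof cases
    case 1
    have nonneg: "\<forall>t\<ge>0. G t \<ge> 0"
      using Mclass2_nonneg[OF assms(1)] assms(3) x0 1 by simp
    have "seg x 0 1 = {0..}" if "sign_part G x 0" for x
      using sign_part_start[OF that] seg_last[of x 0] by simp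
    moreover have "Bmom d 2 G > 0"
      using Mclass2_Bmom2_pos assms(3) nonneg 1 by simp
    ultimately show ?thesis
      using nonneg 1 by auto
  next
    case 2
    have "seg x 1 1 = {0..x 1}" "seg x 1 2 = {x 1..}" if "sign_part G x 1" for x
      using sign_part_start[OF that] seg_inner[of 1 1 x] seg_last[of x 1]
      by (simp_all add: numeral_2_eq_2)
    moreover have "Bmom d 4 G < 0"
    proof (rule Mclass4_Bmom4_neg)
      show "x0 1 \<ge> 0"
        using sign_part_less[of G x0 1 0] sign_part_start[of G x0 1] x0 2 by simp
    qed (use Mclass4_sign_pattern[OF assms(1)] assms(3) x0 2 in simp_all)
    moreover have "{1..2::nat} = {1, 2}" by auto
    ultimately show ?thesis
      using Mclass4_sign_pattern[OF assms(1)] assms(3) 2 by auto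
  qed
qed

end
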